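(* Let $R$ be a principal ideal domain and let $f=\sum_i f_iX^i\in R[X]$. Then $f$ is irreducible in $R[[X]]$ if and only if one of the following conditions holds: (1) $f_0=0$ and $f_1$ is a unit in $R$; (2) $f_0$ is associate in $R$ to $\pi^m$ for some prime element $\pi\in R$ and some integer $m\ge 1$, and whenever $f=gh$ with $g,h\in\widehat{R}_{(\pi)}[X]$, either $g_0$ or $h_0$ is a unit in $\widehat{R}_{(\pi)}$.
   Context: For a polynomial or power series $f$, $f_i$ denotes the coefficient of $X^i$. A nonzero element $a$ of a ring is prime if $(a)$ is a prime ideal. For an ideal $\mathfrak a$ of a ring $R$, $\widehat{R}_{\mathfrak a}=\varprojlim R/\mathfrak a^n$ denotes the $\mathfrak a$-adic completion; thus $\widehat{R}_{(\pi)}$ is the $\pi$-adic completion of $R$, and $R[X]\subseteq \widehat{R}_{(\pi)}[X]$ via the canonical map. *)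

theory Defs
  imports "HOL-Computational_Algebra.Computational_Algebra"
begin

definition pid_ring :: "'a::idom itself \<Rightarrow> bool" where
  "pid_ring _ \<longleftrightarrow>
     (\<forall>I::'a set. 0 \<in> I \<and> (\<forall>x\<in>I. \<forall>y\<in>I. x + y \<in> I) \<and> (\<forall>x\<in>I. \<forall>r. r * x \<in> I)
        \<longrightarrow> (\<exists>a. I = {r * a | r. True}))"

text \<open>Elements of the pi-adic completion, i.e. of the inverse limit of the R/(pi^n), are
  represented by sequences of lifts x n in R (x n represents the component in R/(pi^n))
  which are compatible under the projection maps.  Two such sequences represent the same
  element iff pi^n divides x n - y n for all n; ring operations are componentwise.\<close>
definition padic_compat :: "'a::comm_ring_1 \<Rightarrow> (nat \<Rightarrow> 'a) \<Rightarrow> bool" where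
  "padic_compat p x \<longleftrightarrow> (\<forall>n m. n \<le> m \<longrightarrow> p ^ n dvd (x m - x n))"

definition padic_unit :: "'a::comm_ring_1 \<Rightarrow> (nat \<Rightarrow> 'a) \<Rightarrow> bool" where
  "padic_unit p x \<longleftrightarrow> (\<exists>y. padic_compat p y \<and> (\<forall>n. p ^ n dvd (x n * y n - 1)))"

text \<open>A polynomial over the completion, represented by a sequence of polynomials over R
  of bounded degree whose coefficient sequences are compatible (g n is the reduction mod pi^n).\<close>
definition padic_poly :: "'a::comm_ring_1 \<Rightarrow> (nat \<Rightarrow> 'a poly) \<Rightarrow> bool" where
  "padic_poly p g \<longleftrightarrow> (\<exists>d. \<forall>n. degree (g n) \<le> d) \<and> (\<forall>i. padic_compat p (\<lambda>n. coeff (g n) i))"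

text \<open>f = g * h holds in the polynomial ring over the completion (f embedded canonically).\<close>
definition padic_poly_factors :: "'a::comm_ring_1 \<Rightarrow> 'a poly \<Rightarrow> (nat \<Rightarrow> 'a poly) \<Rightarrow> (nat \<Rightarrow> 'a poly) \<Rightarrow> bool" where
  "padic_poly_factors p f g h \<longleftrightarrow> (\<forall>n i. p ^ n dvd coeff (f - g n * h n) i)"

end

theory Submission
  imports Defs
begin

text \<open>
  If f(0) = 0 then F = fps_of_poly f is X times a series G, and F is irreducible exactly when G,
  i.e. f_1, is a unit. Otherwise f(0) is a nonzero nonunit of the PID R.

  Irreducibility forces f(0) to be associated to a prime power \<pi>^m: if f(0) = \<pi>^m r with r a
  nonunit prime to \<pi>, a Bezout relation lets one lift f(0) = \<pi>^m \<cdot> r coefficient by coefficient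
  to a factorisation of F. If moreover f = g h over the \<pi>-adic completion with nonunit constant
  terms, then g(0) = \<pi>^a w with 1 \<le> a < m and w a unit; multiplying g by a suitable unit E of the
  completed power series ring produces a series G over R with G(0) = \<pi>^a, and since divisibility
  by \<pi>^a in the completion descends to R, G divides F in R[[X]] with a nonunit cofactor.

  Conversely, given F = A B with \<pi> dividing both constant terms, write A = \<pi>^k A' with A' not
  divisible by \<pi> and approximate the Weierstrass preparation A' = U P modulo every power of \<pi>.
  Dividing f by the monic polynomials P_n gives quotients that are compatible by uniqueness of
  Weierstrass division, hence a factorisation of f over the completion in which both constant terms
  are divisible by \<pi>.
\<close>

section \<open>Congruences of power series modulo a scalar\<close>

definition fps_cong :: "'a::comm_ring_1 \<Rightarrow> 'a fps \<Rightarrow> 'a fps \<Rightarrow> bool" where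
  "fps_cong q A B \<longleftrightarrow> (\<forall>i. q dvd (A - B) $ i)"

lemma fps_cong_refl [simp]: "fps_cong q A A"
  by (simp add: fps_cong_def)

lemma fps_cong_one [simp]: "fps_cong 1 A B"
  by (simp add: fps_cong_def)

lemma fps_cong_iff_diff: "fps_cong q A B \<longleftrightarrow> fps_cong q (A - B) 0"
  by (simp add: fps_cong_def)

lemma fps_cong_sym: "fps_cong q A B \<Longrightarrow> fps_cong q B A"
  unfolding fps_cong_def by (metis dvd_minus_iff fps_sub_nth minus_diff_eq)

lemma fps_cong_add:
  assumes "fps_cong q A B" "fps_cong q C D"
  shows "fps_cong q (A + C) (B + D)"
  unfolding fps_cong_def
proof
  fix i
  have "q dvd (A - B) $ i + (C - D) $ i"
    using assms unfolding fps_cong_def by (simp add: dvd_add)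
  then show "q dvd (A + C - (B + D)) $ i"
    by (simp add: algebra_simps)
qed

lemma fps_cong_diff:
  assumes "fps_cong q A B" "fps_cong q C D"
  shows "fps_cong q (A - C) (B - D)"
  unfolding fps_cong_def
proof
  fix i
  have "q dvd (A - B) $ i - (C - D) $ i"
    using assms unfolding fps_cong_def by (simp add: dvd_diff)
  then show "q dvd (A - C - (B - D)) $ i"
    by (simp add: algebra_simps)
qed

lemma fps_cong_trans [trans]: "fps_cong q A B \<Longrightarrow> fps_cong q B C \<Longrightarrow> fps_cong q A C"
  using fps_cong_add[of q A B B C] by (simp add: fps_cong_iff_diff[of q A C] fps_cong_iff_diff[of q "A + B"])

lemma fps_cong_0_mult: "fps_cong q A 0 \<Longrightarrow> fps_cong q (A * B) 0"
  by (simp add: fps_cong_def fps_mult_nth dvd_sum)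

lemma fps_cong_mult:
  assumes "fps_cong q A B" "fps_cong q C D"
  shows "fps_cong q (A * C) (B * D)"
proof -
  have "A * C - B * D = (A - B) * C + (C - D) * B"
    by (simp add: algebra_simps)
  moreover have "fps_cong q ((A - B) * C + (C - D) * B) (0 + 0)"
    using assms by (intro fps_cong_add fps_cong_0_mult) (simp_all flip: fps_cong_iff_diff)
  ultimately show ?thesis
    by (simp add: fps_cong_iff_diff[of q "A * C"])
qed

lemma fps_cong_dvd: "r dvd q \<Longrightarrow> fps_cong q A B \<Longrightarrow> fps_cong r A B"
  unfolding fps_cong_def using dvd_trans by blast

lemma fps_cong_power_le: "n \<le> m \<Longrightarrow> fps_cong (p ^ m) A B \<Longrightarrow> fps_cong (p ^ n) A B"
  by (erule fps_cong_dvd[OF le_imp_power_dvd])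

lemma fps_cong_mult_const: "fps_cong q A 0 \<Longrightarrow> fps_cong (r * q) (fps_const r * A) 0"
  by (simp add: fps_cong_def mult_dvd_mono)

lemma fps_cong_mult_const_cancel:
  fixes c :: "'a::idom"
  shows "c \<noteq> 0 \<Longrightarrow> fps_cong (c * q) (fps_const c * A) 0 \<Longrightarrow> fps_cong q A 0"
  by (simp add: fps_cong_def)

lemma fps_cong_0_iff_dvd: "fps_cong q A 0 \<longleftrightarrow> fps_const q dvd A"
proof
  assume "fps_cong q A 0"
  then have "\<forall>i. \<exists>c. A $ i = q * c"
    by (auto simp: fps_cong_def elim: dvdE)
  then obtain c where "\<And>i. A $ i = q * c i"
    by metis
  then have "A = fps_const q * Abs_fps c"
    by (simp add: fps_eq_iff)
  then show "fps_const q dvd A" ..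
next
  assume "fps_const q dvd A"
  then obtain W where "A = fps_const q * W"
    by (elim dvdE)
  then show "fps_cong q A 0"
    by (simp add: fps_cong_def)
qed

lemma fps_cong_X_power_mult_cancel:
  assumes "fps_cong q (fps_X ^ e * W) R" "\<And>i. e \<le> i \<Longrightarrow> R $ i = 0"
  shows "fps_cong q W 0"
  unfolding fps_cong_def
proof
  fix j
  have "q dvd (fps_X ^ e * W - R) $ (j + e)"
    using assms(1) unfolding fps_cong_def by blast
  then show "q dvd (W - 0) $ j"
    using assms(2) by (simp add: fps_X_power_mult_nth)
qed

section \<open>Principal ideal domains\<close>

lemma dvd_chain_le:
  fixes c :: "nat \<Rightarrow> 'a::comm_monoid_mult"
  assumes "\<And>k. c (Suc k) dvd c k" "k \<le> l"
  shows "c l dvd c k"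
  using assms(2)
proof (induction rule: dec_induct)
  case (step n)
  then show ?case
    using assms(1)[of n] dvd_trans by blast
qed simp

lemma dvd_unit_mult_cancel:
  fixes a :: "'a::comm_monoid_mult"
  assumes "u dvd 1" "a dvd u * b"
  shows "a dvd b"
proof -
  obtain v where "1 = u * v"
    using assms(1) by (elim dvdE)
  then have "b = u * b * v"
    by (metis mult.assoc mult.commute mult_1)
  then show ?thesis
    using assms(2) by (metis dvd_mult2)
qed

lemma pid_ring_ideal_generator:
  fixes I :: "'a::idom set"
  assumes "pid_ring TYPE('a)" "0 \<in> I" "\<And>x y. x \<in> I \<Longrightarrow> y \<in> I \<Longrightarrow> x + y \<in> I"
    "\<And>r x. x \<in> I \<Longrightarrow> r * x \<in> I"
  shows "\<exists>a\<in>I. \<forall>x\<in>I. a dvd x"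
proof -
  have "0 \<in> I \<and> (\<forall>x\<in>I. \<forall>y\<in>I. x + y \<in> I) \<and> (\<forall>x\<in>I. \<forall>r. r * x \<in> I)"
    using assms(2-4) by blast
  then obtain a where a: "I = {r * a | r. True}"
    using spec[OF assms(1)[unfolded pid_ring_def], of I] by blast
  have "a \<in> I"
    unfolding a by (rule CollectI, rule exI[of _ 1]) simp
  moreover have "\<forall>x\<in>I. a dvd x"
    unfolding a by auto
  ultimately show ?thesis
    by blast
qed

lemma pid_ring_bezout:
  fixes x y :: "'a::idom"
  assumes "pid_ring TYPE('a)"
  shows "\<exists>s t. (s * x + t * y) dvd x \<and> (s * x + t * y) dvd y"
proof -
  let ?I = "{s * x + t * y | s t. True}"
  have "\<exists>d\<in>?I. \<forall>z\<in>?I. d dvd z"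
  proof (rule pid_ring_ideal_generator[OF assms])
    have "0 = 0 * x + 0 * y"
      by simp
    then show "0 \<in> ?I"
      by blast
  next
    fix u v assume "u \<in> ?I" "v \<in> ?I"
    then obtain s t s' t' where "u = s * x + t * y" "v = s' * x + t' * y"
      by blast
    then have "u + v = (s + s') * x + (t + t') * y"
      by (simp add: algebra_simps)
    then show "u + v \<in> ?I"
      by blast
  next
    fix r u assume "u \<in> ?I"
    then obtain s t where "u = s * x + t * y"
      by blast
    then have "r * u = (r * s) * x + (r * t) * y"
      by (simp add: algebra_simps)
    then show "r * u \<in> ?I"
      by blast
  qed
  then obtain s t where gen: "\<forall>z\<in>?I. (s * x + t * y) dvd z"
    by blast
  have "x = 1 * x + 0 * y" "y = 0 * x + 1 * y"
    by simp_all
  then have "x \<in> ?I" "y \<in> ?I"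
    by blast+
  then show ?thesis
    using gen by blast
qed

lemma pid_ring_dvd_chain_stationary:
  fixes c :: "nat \<Rightarrow> 'a::idom"
  assumes pid: "pid_ring TYPE('a)" and chain: "\<And>k. c (Suc k) dvd c k"
  shows "\<exists>K. c K dvd c (Suc K)"
proof -
  let ?I = "{x. \<exists>k. c k dvd x}"
  have "\<exists>a\<in>?I. \<forall>x\<in>?I. a dvd x"
  proof (rule pid_ring_ideal_generator[OF pid])
    fix x y assume "x \<in> ?I" "y \<in> ?I"
    then obtain k l where "c k dvd x" "c l dvd y"
      by blast
    moreover have "c (max k l) dvd c k" "c (max k l) dvd c l"
      using dvd_chain_le[of c k "max k l", OF chain] dvd_chain_le[of c l "max k l", OF chain]
      by simp_all
    ultimately have "c (max k l) dvd x" "c (max k l) dvd y"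
      using dvd_trans by blast+
    then have "c (max k l) dvd x + y"
      by (rule dvd_add)
    then show "x + y \<in> ?I"
      by blast
  next
    fix r x assume "x \<in> ?I"
    then obtain k where "c k dvd x"
      by blast
    then have "c k dvd r * x"
      by (rule dvd_mult)
    then show "r * x \<in> ?I"
      by blast
  qed simp
  then obtain a K where "c K dvd a" "\<forall>x\<in>?I. a dvd x"
    by blast
  moreover have "c (Suc K) \<in> ?I"
    using dvd_refl by blast
  ultimately show ?thesis
    using dvd_trans by blast
qed

lemma pid_ring_not_dvd_power:
  fixes p r :: "'a::idom"
  assumes pid: "pid_ring TYPE('a)" and r: "r \<noteq> 0" and p: "\<not> p dvd 1"
  shows "\<exists>k. \<not> p ^ k dvd r"
proof (rule ccontr)
  assume "\<not> ?thesis"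
  then have "\<forall>k. \<exists>c. r = p ^ k * c"
    by (auto elim: dvdE)
  then have "\<exists>c. \<forall>k. r = p ^ k * c k"
    by (rule choice)
  then obtain c where c: "\<And>k. r = p ^ k * c k"
    by blast
  have c0: "c k \<noteq> 0" for k
    using c[of k] r by auto
  have p0: "p \<noteq> 0"
    using c[of 1] r by auto
  have step: "c k = p * c (Suc k)" for k
  proof -
    have "p ^ k * c k = p ^ Suc k * c (Suc k)"
      using c[of k] c[of "Suc k"] by (rule trans[OF sym])
    also have "\<dots> = p ^ k * (p * c (Suc k))"
      by (simp add: ac_simps)
    finally have eq: "p ^ k * c k = p ^ k * (p * c (Suc k))" .
    have "p ^ k \<noteq> 0"
      using p0 by simp
    then show ?thesis
      using eq by (rule mult_left_cancel[THEN iffD1])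
  qed
  have "c (Suc k) dvd c k" for k
    using step[of k] by simp
  then obtain K where "c K dvd c (Suc K)"
    using pid_ring_dvd_chain_stationary[OF pid, of c] by blast
  then obtain e where e: "c (Suc K) = c K * e"
    by (elim dvdE)
  have "c K * 1 = p * c (Suc K)"
    using step[of K] by simp
  also have "\<dots> = c K * (p * e)"
    using e by (simp add: ac_simps)
  finally have "1 = p * e"
    using c0[of K] by (rule mult_left_cancel[THEN iffD1, rotated])
  then have "p dvd 1"
    by (rule dvdI)
  then show False
    using p by blast
qed

lemma pid_ring_power_factor:
  fixes p r :: "'a::idom"
  assumes "pid_ring TYPE('a)" "r \<noteq> 0" "\<not> p dvd 1"
  shows "\<exists>k r'. r = p ^ k * r' \<and> \<not> p dvd r'"
proof -
  have "\<exists>k. \<not> p ^ k dvd r"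
    using pid_ring_not_dvd_power[OF assms] .
  then obtain k where k: "p ^ k dvd r" "\<not> p ^ Suc k dvd r"
    using exists_least_lemma[of "\<lambda>k. \<not> p ^ k dvd r"] by auto
  then obtain r' where r': "r = p ^ k * r'"
    by (elim dvdE)
  moreover have "\<not> p dvd r'"
  proof
    assume "p dvd r'"
    then have "p ^ k * p dvd p ^ k * r'"
      by (rule mult_dvd_mono[OF dvd_refl])
    then show False
      using k(2) r' by (simp add: power_Suc2)
  qed
  ultimately show ?thesis
    by blast
qed

lemma pid_ring_irreducible_factor:
  fixes x :: "'a::idom"
  assumes pid: "pid_ring TYPE('a)" and x: "x \<noteq> 0" "\<not> x dvd 1"
  shows "\<exists>q. irreducible q \<and> q dvd x"
proof (rule ccontr)
  assume none: "\<not> ?thesis"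
  define P where "P y \<longleftrightarrow> y dvd x \<and> y \<noteq> 0 \<and> \<not> y dvd 1" for y
  have "\<exists>z. P z \<and> z dvd y \<and> \<not> y dvd z" if y: "P y" for y
  proof -
    have "\<not> irreducible y"
      using none y unfolding P_def by blast
    then obtain a b where ab: "y = a * b" "\<not> a dvd 1" "\<not> b dvd 1"
      using y unfolding P_def irreducible_def by blast
    have "\<not> y dvd a"
    proof
      assume "y dvd a"
      then have "y * b dvd y * 1"
        using ab(1) by (simp add: mult_dvd_mono)
      then show False
        using ab(3) y unfolding P_def by simp
    qed
    moreover have "P a"
      using y ab unfolding P_def by (auto intro: dvd_trans)
    ultimately show ?thesis
      using ab(1) by auto
  qed
  then obtain next_factor where nf: "\<And>y. P y \<Longrightarrow>
      P (next_factor y) \<and> next_factor y dvd y \<and> \<not> y dvd next_factor y"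
    by metis
  define c where "c k = (next_factor ^^ k) x" for k
  have "P (c k)" for k
    by (induction k) (use nf x in \<open>auto simp: c_def P_def\<close>)
  then have "c (Suc k) dvd c k \<and> \<not> c k dvd c (Suc k)" for k
    using nf by (simp add: c_def)
  then show False
    using pid_ring_dvd_chain_stationary[OF pid, of c] by blast
qed

lemma pid_ring_irreducible_imp_prime_elem:
  fixes q :: "'a::idom"
  assumes pid: "pid_ring TYPE('a)" and q: "irreducible q"
  shows "prime_elem q"
proof (rule prime_elemI)
  show "q \<noteq> 0" "\<not> q dvd 1"
    using q by (auto simp: irreducible_def)
  fix a b assume qab: "q dvd a * b"
  show "q dvd a \<or> q dvd b"
  proof (cases "q dvd a")
    case nqa: False
    obtain s t where d: "(s * q + t * a) dvd q" "(s * q + t * a) dvd a"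
      using pid_ring_bezout[OF pid] by blast
    then obtain e where e: "q = (s * q + t * a) * e"
      by (elim dvdE)
    have "\<not> e dvd 1"
    proof
      assume "e dvd 1"
      then have "q dvd s * q + t * a"
        using e dvd_unit_mult_cancel[of e q "s * q + t * a"] by (simp add: ac_simps)
      then show False
        using nqa d(2) dvd_trans by blast
    qed
    then have unit: "(s * q + t * a) dvd 1"
      using irreducibleD[OF q e] by blast
    have "(s * q + t * a) * b = q * (s * b) + (a * b) * t"
      by (simp add: algebra_simps)
    moreover have "q dvd q * (s * b) + (a * b) * t"
      by (intro dvd_add dvd_triv_left dvd_mult2 qab)
    ultimately have "q dvd (s * q + t * a) * b"
      by simp
    with unit have "q dvd b"
      by (rule dvd_unit_mult_cancel)
    then show ?thesis ..
  qed simp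
qed

lemma pid_ring_prime_factor:
  fixes x :: "'a::idom"
  assumes pid: "pid_ring TYPE('a)" and "x \<noteq> 0" "\<not> x dvd 1"
  shows "\<exists>q. prime_elem q \<and> q dvd x"
  using pid_ring_irreducible_factor[OF assms] pid_ring_irreducible_imp_prime_elem[OF pid] by blast

lemma prime_elem_dvd_prime_elem_power:
  fixes p q :: "'a::idom"
  assumes p: "prime_elem p" and q: "prime_elem q" and "q dvd p ^ k"
  shows "p dvd q"
proof -
  have "q dvd p"
    using assms prime_elem_dvd_power by blast
  then obtain e where e: "p = q * e"
    by (elim dvdE)
  have "\<not> p dvd e"
  proof
    assume "p dvd e"
    then obtain c where "e = p * c"
      by (elim dvdE)
    then have eq: "p * 1 = p * (q * c)"
      using e by (metis mult.left_commute mult_1_right)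
    have "p \<noteq> 0"
      using p by (simp add: prime_elem_def)
    then have "1 = q * c"
      using eq by (rule mult_left_cancel[THEN iffD1])
    then have "q dvd 1"
      by (rule dvdI)
    then show False
      using q prime_elem_not_unit by blast
  qed
  moreover have "p dvd q * e"
    using e by simp
  ultimately show ?thesis
    using prime_elem_dvd_multD[OF p] by blast
qed

lemma pid_ring_bezout_prime_power:
  fixes p r :: "'a::idom"
  assumes pid: "pid_ring TYPE('a)" and p: "prime_elem p" and r: "\<not> p dvd r"
  shows "\<exists>s t. s * p ^ k + t * r = 1"
proof -
  obtain s t where d: "(s * p ^ k + t * r) dvd p ^ k" "(s * p ^ k + t * r) dvd r"
    using pid_ring_bezout[OF pid] by blast
  have "(s * p ^ k + t * r) dvd 1"
  proof (rule ccontr)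
    assume "\<not> ?thesis"
    moreover have "s * p ^ k + t * r \<noteq> 0"
      using d(2) r by auto
    ultimately obtain q where q: "prime_elem q" "q dvd s * p ^ k + t * r"
      using pid_ring_prime_factor[OF pid] by blast
    then have "p dvd q"
      using prime_elem_dvd_prime_elem_power[OF p q(1)] d(1) dvd_trans by blast
    then show False
      using r q(2) d(2) dvd_trans by blast
  qed
  then obtain v where "1 = (s * p ^ k + t * r) * v"
    by (elim dvdE)
  then have "(s * v) * p ^ k + (t * v) * r = 1"
    by (simp add: algebra_simps)
  then show ?thesis
    by blast
qed

lemma pid_ring_nonunit_dvd_prime_power:
  fixes p x :: "'a::idom"
  assumes pid: "pid_ring TYPE('a)" and p: "prime_elem p" and x: "x dvd p ^ m" "\<not> x dvd 1"
  shows "p dvd x"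
proof -
  have "x \<noteq> 0"
    using x(1) p by (auto simp: prime_elem_def)
  then obtain q where q: "prime_elem q" "q dvd x"
    using pid_ring_prime_factor[OF pid _ x(2)] by blast
  then have "p dvd q"
    using prime_elem_dvd_prime_elem_power[OF p q(1)] dvd_trans[OF _ x(1)] by blast
  then show ?thesis
    using q(2) by (rule dvd_trans)
qed

section \<open>Power series over a commutative ring\<close>

lemma fps_dvd_one_iff:
  fixes F :: "'a::comm_ring_1 fps"
  shows "F dvd 1 \<longleftrightarrow> F $ 0 dvd 1"
proof
  assume "F dvd 1"
  then obtain G where "1 = F * G"
    by (elim dvdE)
  then have "1 = F $ 0 * G $ 0"
    by (metis fps_mult_nth_0 fps_one_nth)
  then show "F $ 0 dvd 1"
    by (rule dvdI)
next
  assume "F $ 0 dvd 1"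
  then obtain y where "1 = F $ 0 * y"
    by (elim dvdE)
  then have "F * fps_right_inverse F y = 1"
    by (intro fps_right_inverse) simp
  then show "F dvd 1"
    by (metis dvdI)
qed

lemma fps_eq_fps_X_times_shift:
  fixes F :: "'a::comm_ring_1 fps"
  assumes "F $ 0 = 0"
  shows "F = fps_X * fps_shift 1 F"
  by (rule fps_ext) (use assms in \<open>auto simp: fps_X_mult_nth\<close>)

lemma fps_mult_nth_split:
  fixes A B :: "'a::comm_ring_1 fps"
  shows "(A * B) $ i = A $ 0 * B $ i + (\<Sum>j\<in>{1..i}. A $ j * B $ (i - j))"
proof -
  have "{0..i} = insert 0 {1..i}"
    by auto
  then show ?thesis
    by (simp add: fps_mult_nth)
qed

text \<open>Lifting F(0) = a b to a factorisation F = G H: the n-th coefficients t c and s c contribute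
  (s a + t b) c = c, the part of F_n not yet accounted for by lower coefficients.\<close>
function coprime_split_seq :: "'a::comm_ring_1 fps \<Rightarrow> 'a \<Rightarrow> 'a \<Rightarrow> 'a \<Rightarrow> 'a \<Rightarrow> nat \<Rightarrow> 'a \<times> 'a" where
  "coprime_split_seq F a b s t n = (if n = 0 then (a, b) else
     (let c = F $ n - (\<Sum>i\<in>{1..<n}. fst (coprime_split_seq F a b s t i) *
                                    snd (coprime_split_seq F a b s t (n - i)))
      in (t * c, s * c)))"
  by pat_completeness auto
termination
  by (relation "measure (\<lambda>(F, a, b, s, t, n). n)") auto

declare coprime_split_seq.simps [simp del]

lemma fps_factor_coprime_const:
  fixes F :: "'a::comm_ring_1 fps"
  assumes F0: "F $ 0 = a * b" and st: "s * a + t * b = 1"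
  shows "\<exists>G H. F = G * H \<and> G $ 0 = a \<and> H $ 0 = b"
proof -
  define G where "G = Abs_fps (\<lambda>n. fst (coprime_split_seq F a b s t n))"
  define H where "H = Abs_fps (\<lambda>n. snd (coprime_split_seq F a b s t n))"
  have G0: "G $ 0 = a" and H0: "H $ 0 = b"
    unfolding G_def H_def by (simp_all add: coprime_split_seq.simps)
  have "F $ n = (G * H) $ n" for n
  proof (cases "n = 0")
    case True
    then show ?thesis
      using F0 G0 H0 by simp
  next
    case False
    define c where "c = F $ n - (\<Sum>i\<in>{1..<n}. G $ i * H $ (n - i))"
    have Gn: "G $ n = t * c" and Hn: "H $ n = s * c"
      using False unfolding c_def G_def H_def
      by (simp_all add: coprime_split_seq.simps[of F a b s t n] Let_def)
    have "{1..n} = insert n {1..<n}"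
      using False by auto
    then have "(G * H) $ n = G $ 0 * H $ n + G $ n * H $ 0 + (\<Sum>i\<in>{1..<n}. G $ i * H $ (n - i))"
      by (simp add: fps_mult_nth_split add_ac)
    also have "\<dots> = (s * a + t * b) * c + (F $ n - c)"
      unfolding G0 H0 Gn Hn c_def by (simp add: algebra_simps)
    finally show ?thesis
      using st by simp
  qed
  then have "F = G * H"
    by (intro fps_ext) simp
  then show ?thesis
    using G0 H0 by blast
qed

section \<open>Compatible sequences\<close>

lemma padic_compatD: "padic_compat p x \<Longrightarrow> n \<le> m \<Longrightarrow> p ^ n dvd x m - x n"
  by (simp add: padic_compat_def)

lemma padic_compat_SucI:
  fixes x :: "nat \<Rightarrow> 'a::comm_ring_1"
  assumes "\<And>n. p ^ n dvd x (Suc n) - x n"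
  shows "padic_compat p x"
  unfolding padic_compat_def
proof (intro allI impI)
  fix n m :: nat
  assume "n \<le> m"
  then show "p ^ n dvd x m - x n"
  proof (induction rule: dec_induct)
    case (step k)
    have "p ^ n dvd x (Suc k) - x k"
      using assms[of k] le_imp_power_dvd[OF \<open>n \<le> k\<close>] dvd_trans by blast
    then have "p ^ n dvd (x (Suc k) - x k) + (x k - x n)"
      using step.IH by (rule dvd_add)
    then show ?case
      by simp
  qed simp
qed

lemma padic_compat_const [simp]: "padic_compat p (\<lambda>n. c)"
  by (simp add: padic_compat_def)

lemma padic_compat_add:
  assumes "padic_compat p x" "padic_compat p y"
  shows "padic_compat p (\<lambda>n. x n + y n)"
  unfolding padic_compat_def
proof (intro allI impI)
  fix n m :: nat
  assume "n \<le> m"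
  then have "p ^ n dvd (x m - x n) + (y m - y n)"
    using assms by (simp add: padic_compatD dvd_add)
  then show "p ^ n dvd x m + y m - (x n + y n)"
    by (simp add: algebra_simps)
qed

lemma padic_compat_diff:
  assumes "padic_compat p x" "padic_compat p y"
  shows "padic_compat p (\<lambda>n. x n - y n)"
  unfolding padic_compat_def
proof (intro allI impI)
  fix n m :: nat
  assume "n \<le> m"
  then have "p ^ n dvd (x m - x n) - (y m - y n)"
    using assms by (simp add: padic_compatD dvd_diff)
  then show "p ^ n dvd x m - y m - (x n - y n)"
    by (simp add: algebra_simps)
qed

lemma padic_compat_mult:
  assumes "padic_compat p x" "padic_compat p y"
  shows "padic_compat p (\<lambda>n. x n * y n)"
  unfolding padic_compat_def
proof (intro allI impI)
  fix n m :: nat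
  assume "n \<le> m"
  then have "p ^ n dvd x m * (y m - y n) + (x m - x n) * y n"
    using assms by (simp add: padic_compatD dvd_add)
  then show "p ^ n dvd x m * y m - x n * y n"
    by (simp add: algebra_simps)
qed

lemma padic_compat_sum:
  assumes "\<And>j. j \<in> S \<Longrightarrow> padic_compat p (x j)"
  shows "padic_compat p (\<lambda>n. \<Sum>j\<in>S. x j n)"
  using assms
proof (induction S rule: infinite_finite_induct)
  case (insert j S)
  then have "padic_compat p (\<lambda>n. x j n + (\<Sum>j\<in>S. x j n))"
    by (intro padic_compat_add) auto
  then show ?case
    using insert by simp
qed auto

lemma padic_compat_quotient:
  fixes p :: "'a::idom"
  assumes p0: "p \<noteq> 0" and x: "padic_compat p x" and y: "\<And>n. x (n + a) = p ^ a * y n"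
  shows "padic_compat p y"
  unfolding padic_compat_def
proof (intro allI impI)
  fix n k :: nat
  assume "n \<le> k"
  then have "p ^ (n + a) dvd x (k + a) - x (n + a)"
    using x by (simp add: padic_compatD)
  then have "p ^ a * p ^ n dvd p ^ a * (y k - y n)"
    by (simp add: y power_add right_diff_distrib mult.commute)
  then show "p ^ n dvd y k - y n"
    using p0 by simp
qed

lemma padic_unit_imp_not_dvd:
  assumes p: "\<not> p dvd 1" and "padic_unit p x"
  shows "\<not> p dvd x 1"
proof
  obtain y where "\<forall>n. p ^ n dvd x n * y n - 1"
    using assms(2) unfolding padic_unit_def by blast
  then have inv: "p dvd x 1 * y 1 - 1"
    by (metis power_one_right)
  assume "p dvd x 1"
  then have "p dvd x 1 * y 1"
    by (rule dvd_mult2)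
  then have "p dvd x 1 * y 1 - (x 1 * y 1 - 1)"
    using inv by (rule dvd_diff)
  then show False
    using p by simp
qed

lemma padic_compat_inverse:
  fixes x :: "nat \<Rightarrow> 'a::comm_ring_1"
  assumes x: "padic_compat p x" and ys: "\<And>n. s n * p ^ n + y n * x n = 1"
  shows "padic_compat p y"
  unfolding padic_compat_def
proof (intro allI impI)
  fix n m :: nat
  assume nm: "n \<le> m"
  have inv: "p ^ k dvd x k * y k - 1" for k
  proof -
    have "x k * y k - 1 = p ^ k * (- s k)"
      using ys[of k] by (simp add: algebra_simps)
    then show ?thesis
      by simp
  qed
  have "p ^ n dvd (x m * y m - 1) - (x m - x n) * y m"
    using dvd_trans[OF le_imp_power_dvd[OF nm] inv[of m]] dvd_mult2[OF padic_compatD[OF x nm]]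
    by (rule dvd_diff)
  then have "p ^ n dvd (x m * y m - 1) - (x m - x n) * y m - (x n * y n - 1)"
    using inv[of n] by (rule dvd_diff)
  then have "p ^ n dvd x n * (y m - y n)"
    by (simp add: algebra_simps)
  then have "p ^ n dvd p ^ n * (s n * (y m - y n)) + y n * (x n * (y m - y n))"
    by (rule dvd_add[OF dvd_triv_left dvd_mult])
  also have "p ^ n * (s n * (y m - y n)) + y n * (x n * (y m - y n))
      = (y m - y n) * (s n * p ^ n + y n * x n)"
    by (simp add: algebra_simps)
  finally show "p ^ n dvd y m - y n"
    using ys[of n] by simp
qed

lemma padic_unit_iff_not_dvd:
  fixes p :: "'a::idom"
  assumes pid: "pid_ring TYPE('a)" and p: "prime_elem p" and x: "padic_compat p x"
  shows "padic_unit p x \<longleftrightarrow> \<not> p dvd x 1"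
proof
  have "\<not> p dvd 1"
    using p by (simp add: prime_elem_def)
  then show "padic_unit p x \<Longrightarrow> \<not> p dvd x 1"
    by (rule padic_unit_imp_not_dvd)
next
  assume nd: "\<not> p dvd x 1"
  have "\<exists>y s. s * p ^ n + y * x n = 1" for n
  proof (cases "n = 0")
    case True
    then show ?thesis
      by (intro exI[of _ 0] exI[of _ 1]) simp
  next
    case False
    then have "p dvd x n - x 1"
      using padic_compatD[OF x, of 1 n] by simp
    have "\<not> p dvd x n"
    proof
      assume "p dvd x n"
      then have "p dvd x n - (x n - x 1)"
        using \<open>p dvd x n - x 1\<close> by (rule dvd_diff)
      then show False
        using nd by simp
    qed
    then show ?thesis
      using pid_ring_bezout_prime_power[OF pid p] by blast
  qed
  then have "\<exists>y. \<forall>n. \<exists>s. s * p ^ n + y n * x n = 1"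
    by (intro choice allI)
  then obtain y where "\<forall>n. \<exists>s. s * p ^ n + y n * x n = 1"
    by blast
  then have "\<exists>s. \<forall>n. s n * p ^ n + y n * x n = 1"
    by (rule choice)
  then obtain s where ys: "\<And>n. s n * p ^ n + y n * x n = 1"
    by blast
  have "p ^ n dvd x n * y n - 1" for n
  proof -
    have "x n * y n - 1 = p ^ n * (- s n)"
      using ys[of n] by (simp add: algebra_simps)
    then show ?thesis
      by simp
  qed
  then show "padic_unit p x"
    unfolding padic_unit_def using padic_compat_inverse[OF x ys] by blast
qed

section \<open>Descending a factorisation from the completion\<close>

text \<open>The quotient x / c when c divides x; an arbitrary value otherwise.\<close>
definition exact_quot :: "'a::comm_semiring_1 \<Rightarrow> 'a \<Rightarrow> 'a" where
  "exact_quot c x = (SOME q. x = c * q)"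

lemma exact_quot: "c dvd x \<Longrightarrow> x = c * exact_quot c x"
  unfolding exact_quot_def by (rule someI_ex) (auto elim: dvdE)

lemma padic_compat_power_times_unit:
  fixes p :: "'a::idom"
  assumes p0: "p \<noteq> 0" and x: "padic_compat p x" and nd: "\<not> p ^ m dvd x m"
  shows "\<exists>a w. a < m \<and> padic_compat p w \<and> \<not> p dvd w 1 \<and> (\<forall>n. p ^ n dvd x n - p ^ a * w n)"
proof -
  have "\<exists>k. \<not> \<not> p ^ k dvd x k \<and> \<not> p ^ Suc k dvd x (Suc k)"
    by (rule exists_least_lemma) (use nd in auto)
  then obtain a where a: "p ^ a dvd x a" "\<not> p ^ Suc a dvd x (Suc a)"
    by blast
  have "a < m"
  proof (rule ccontr)
    assume "\<not> a < m"
    then have "m \<le> a"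
      by simp
    have "p ^ m dvd x a"
      using le_imp_power_dvd[OF \<open>m \<le> a\<close>] a(1) by (rule dvd_trans)
    then have "p ^ m dvd x a - (x a - x m)"
      using padic_compatD[OF x \<open>m \<le> a\<close>] by (rule dvd_diff)
    then show False
      using nd by simp
  qed
  have "p ^ a dvd x (n + a)" for n
  proof -
    have "p ^ a dvd x (n + a) - x a"
      using padic_compatD[OF x] by simp
    then have "p ^ a dvd (x (n + a) - x a) + x a"
      using a(1) by (rule dvd_add)
    then show ?thesis
      by simp
  qed
  define w where "w n = exact_quot (p ^ a) (x (n + a))" for n
  have xw: "x (n + a) = p ^ a * w n" for n
    unfolding w_def by (rule exact_quot) fact
  have "padic_compat p w"
    using p0 x xw by (rule padic_compat_quotient)
  moreover have "\<not> p dvd w 1"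
  proof
    assume "p dvd w 1"
    then have "p ^ a * p dvd p ^ a * w 1"
      by (rule mult_dvd_mono[OF dvd_refl])
    then show False
      using a(2) xw[of 1] by (simp add: mult.commute)
  qed
  moreover have "p ^ n dvd x n - p ^ a * w n" for n
  proof -
    have "p ^ n dvd x (n + a) - x n"
      using padic_compatD[OF x] by simp
    then have "p ^ n dvd - (x (n + a) - x n)"
      by (simp only: dvd_minus_iff)
    then show ?thesis
      by (simp add: xw)
  qed
  ultimately show ?thesis
    using \<open>a < m\<close> by blast
qed

text \<open>Level n of the k-th coefficient of a unit E with E(0) = z such that g E has coefficients
  in R: the k-th coefficient of g E is fixed to its representative at level a, and the correction
  is divisible by p^a because all levels agree modulo p^a.\<close>
function unit_lift :: "'a::comm_ring_1 \<Rightarrow> nat \<Rightarrow> (nat \<Rightarrow> 'a poly) \<Rightarrow> (nat \<Rightarrow> 'a) \<Rightarrow> nat \<Rightarrow> nat \<Rightarrow> 'a"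
  where
  "unit_lift p a g z k n = (if k = 0 then z n else z n * exact_quot (p ^ a)
     ((\<Sum>j\<in>{1..k}. coeff (g a) j * unit_lift p a g z (k - j) a) -
      (\<Sum>j\<in>{1..k}. coeff (g (n + a)) j * unit_lift p a g z (k - j) (n + a))))"
  by pat_completeness auto
termination
  by (relation "measure (\<lambda>(p, a, g, z, k, n). k)") auto

declare unit_lift.simps [simp del]

context
  fixes p :: "'a::idom" and a :: nat and g :: "nat \<Rightarrow> 'a poly" and z :: "nat \<Rightarrow> 'a"
  assumes p0: "p \<noteq> 0"
    and g_compat: "\<And>j. padic_compat p (\<lambda>n. coeff (g n) j)"
    and z_compat: "padic_compat p z"
    and gz: "\<And>n. p ^ n dvd coeff (g n) 0 * z n - p ^ a"
begin

definition lift_tail :: "nat \<Rightarrow> nat \<Rightarrow> 'a" where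
  "lift_tail k n = (\<Sum>j\<in>{1..k}. coeff (g n) j * unit_lift p a g z (k - j) n)"

lemma unit_lift_0: "unit_lift p a g z 0 n = z n"
  by (simp add: unit_lift.simps)

lemma unit_lift_pos:
  "0 < k \<Longrightarrow> unit_lift p a g z k n = z n * exact_quot (p ^ a) (lift_tail k a - lift_tail k (n + a))"
  by (subst unit_lift.simps) (simp add: lift_tail_def)

lemma lift_tail_quot:
  assumes "padic_compat p (lift_tail k)"
  shows "lift_tail k a - lift_tail k (n + a) =
    p ^ a * exact_quot (p ^ a) (lift_tail k a - lift_tail k (n + a))"
proof (rule exact_quot)
  have "p ^ a dvd lift_tail k (n + a) - lift_tail k a"
    using padic_compatD[OF assms] by simp
  then show "p ^ a dvd lift_tail k a - lift_tail k (n + a)"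
    by (metis dvd_minus_iff minus_diff_eq)
qed

lemma padic_compat_unit_lift:
  "padic_compat p (unit_lift p a g z k) \<and> padic_compat p (lift_tail k)"
proof (induction k rule: less_induct)
  case (less k)
  have tail: "padic_compat p (lift_tail k)"
    unfolding lift_tail_def
  proof (rule padic_compat_sum)
    fix j assume "j \<in> {1..k}"
    then show "padic_compat p (\<lambda>n. coeff (g n) j * unit_lift p a g z (k - j) n)"
      using less g_compat by (intro padic_compat_mult) auto
  qed
  show ?case
  proof (cases "k = 0")
    case True
    then show ?thesis
      using z_compat tail by (simp add: unit_lift_0)
  next
    case False
    define x where "x n = lift_tail k a - lift_tail k n" for n
    have "padic_compat p (\<lambda>n. exact_quot (p ^ a) (x (n + a)))"
      using p0 padic_compat_diff[OF padic_compat_const tail]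
      by (rule padic_compat_quotient) (use lift_tail_quot[OF tail] in \<open>simp add: x_def\<close>)
    then have "padic_compat p (\<lambda>n. z n * exact_quot (p ^ a) (x (n + a)))"
      by (rule padic_compat_mult[OF z_compat])
    then show ?thesis
      using False tail by (simp add: unit_lift_pos x_def)
  qed
qed

lemma unit_lift_congruence:
  "p ^ n dvd (\<Sum>j=0..k. coeff (g n) j * unit_lift p a g z (k - j) n) -
     (if k = 0 then p ^ a else lift_tail k a)"
proof (cases "k = 0")
  case True
  then show ?thesis
    using gz by (simp add: unit_lift_0)
next
  case False
  have tail: "padic_compat p (lift_tail k)"
    using padic_compat_unit_lift by blast
  define Q where "Q = exact_quot (p ^ a) (lift_tail k a - lift_tail k (n + a))"
  have "{0..k} = insert 0 {1..k}"
    by auto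
  then have "(\<Sum>j=0..k. coeff (g n) j * unit_lift p a g z (k - j) n) - lift_tail k a
      = (coeff (g n) 0 * z n - p ^ a) * Q - (lift_tail k (n + a) - lift_tail k n)"
    using False lift_tail_quot[OF tail, of n]
    by (simp add: unit_lift_pos lift_tail_def Q_def algebra_simps)
  moreover have "p ^ n dvd (coeff (g n) 0 * z n - p ^ a) * Q - (lift_tail k (n + a) - lift_tail k n)"
    using dvd_mult2[OF gz] padic_compatD[OF tail, of n "n + a"] by (rule dvd_diff) simp
  ultimately show ?thesis
    using False by simp
qed

lemma padic_poly_times_unit_fps:
  "\<exists>E G. (\<forall>k. padic_compat p (\<lambda>n. E n $ k)) \<and> (\<forall>n. E n $ 0 = z n) \<and> G $ 0 = p ^ a \<and>
     (\<forall>n. fps_cong (p ^ n) (fps_of_poly (g n) * E n) G)"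
proof (intro exI conjI allI)
  let ?E = "\<lambda>n. Abs_fps (\<lambda>k. unit_lift p a g z k n)"
  let ?G = "Abs_fps (\<lambda>k. if k = 0 then p ^ a else lift_tail k a)"
  show "padic_compat p (\<lambda>n. ?E n $ k)" for k
    using padic_compat_unit_lift by simp
  show "?E n $ 0 = z n" for n
    by (simp add: unit_lift_0)
  show "?G $ 0 = p ^ a"
    by simp
  show "fps_cong (p ^ n) (fps_of_poly (g n) * ?E n) ?G" for n
    unfolding fps_cong_def using unit_lift_congruence by (simp add: fps_mult_nth)
qed

end

text \<open>Long division by G, assuming that every division by the constant term G(0) is exact.\<close>
function fps_div_seq :: "'a::comm_ring_1 fps \<Rightarrow> 'a fps \<Rightarrow> nat \<Rightarrow> 'a" where
  "fps_div_seq G F k = exact_quot (G $ 0) (F $ k - (\<Sum>j\<in>{1..k}. G $ j * fps_div_seq G F (k - j)))"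
  by pat_completeness auto
termination
  by (relation "measure (\<lambda>(G, F, k). k)") auto

declare fps_div_seq.simps [simp del]

lemma fps_div_seq_nth:
  assumes "G $ 0 dvd F $ k - (\<Sum>j\<in>{1..k}. G $ j * fps_div_seq G F (k - j))"
  shows "(G * Abs_fps (fps_div_seq G F)) $ k = F $ k"
  using exact_quot[OF assms] by (simp add: fps_mult_nth_split fps_div_seq.simps[of G F k])

text \<open>Read in the completed power series ring: G T \<equiv> 0 modulo X^k with G(0) = p^a forces
  T \<equiv> 0 modulo X^k. Level n of T is obtained from level n + a of G T.\<close>
lemma padic_fps_low_coeffs_zero:
  fixes p :: "'a::idom"
  assumes p0: "p \<noteq> 0" and G0: "G $ 0 = p ^ a"
    and T: "\<And>i. padic_compat p (\<lambda>n. T n $ i)"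
    and GT: "\<And>n i. i < k \<Longrightarrow> p ^ n dvd (G * T n) $ i"
  shows "i < k \<Longrightarrow> p ^ n dvd T n $ i"
proof (induction i arbitrary: n rule: less_induct)
  case (less i)
  have "p ^ (n + a) dvd (\<Sum>j\<in>{1..i}. G $ j * T (n + a) $ (i - j))"
    using less by (intro dvd_sum dvd_mult) auto
  then have "p ^ (n + a) dvd (G * T (n + a)) $ i - (\<Sum>j\<in>{1..i}. G $ j * T (n + a) $ (i - j))"
    using GT[OF less.prems] by (rule dvd_diff[rotated])
  then have "p ^ a * p ^ n dvd p ^ a * T (n + a) $ i"
    by (simp add: fps_mult_nth_split G0 power_add mult.commute)
  then have "p ^ n dvd T (n + a) $ i"
    using p0 by simp
  moreover have "p ^ n dvd T (n + a) $ i - T n $ i"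
    using padic_compatD[OF T] by simp
  ultimately have "p ^ n dvd T (n + a) $ i - (T (n + a) $ i - T n $ i)"
    by (rule dvd_diff)
  then show ?case
    by simp
qed

lemma padic_fps_coeff_dvd:
  fixes p :: "'a::idom"
  assumes p0: "p \<noteq> 0" and G0: "G $ 0 = p ^ a"
    and T: "\<And>i. padic_compat p (\<lambda>n. T n $ i)"
    and E0: "p ^ a dvd y * E a $ 0 - 1"
    and D: "\<And>i. i < k \<Longrightarrow> D $ i = 0"
    and cong: "\<And>n. fps_cong (p ^ n) (G * T n) (E n * D)"
  shows "p ^ a dvd D $ k"
proof -
  have ED_low: "(E n * D) $ i = 0" if "i < k" for n i
    using that D by (simp add: fps_mult_nth)
  have ED_k: "(E n * D) $ k = E n $ 0 * D $ k" for n
    using D by (simp add: fps_mult_nth_split)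
  have GT_dvd: "p ^ n dvd (G * T n) $ i - (E n * D) $ i" for n i
    using cong[of n] by (simp add: fps_cong_def)
  have T_low: "p ^ n dvd T n $ i" if "i < k" for n i
    using p0 G0 T _ that
  proof (rule padic_fps_low_coeffs_zero)
    fix n i :: nat assume "i < k"
    then show "p ^ n dvd (G * T n) $ i"
      using GT_dvd[of n i] ED_low by simp
  qed
  define S where "S = (\<Sum>j\<in>{1..k}. G $ j * T a $ (k - j))"
  have "p ^ a dvd S"
    unfolding S_def using T_low by (intro dvd_sum dvd_mult) auto
  then have "p ^ a dvd (p ^ a * T a $ k + S) - ((G * T a) $ k - (E a * D) $ k)"
    by (rule dvd_diff[OF dvd_add[OF dvd_triv_left] GT_dvd])
  moreover have "(G * T a) $ k = p ^ a * T a $ k + S"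
    by (simp add: fps_mult_nth_split G0 S_def)
  ultimately have "p ^ a dvd E a $ 0 * D $ k"
    by (simp add: ED_k)
  then have "p ^ a dvd y * (E a $ 0 * D $ k) - (y * E a $ 0 - 1) * D $ k"
    by (rule dvd_diff[OF dvd_mult dvd_mult2[OF E0]])
  then show ?thesis
    by (simp add: algebra_simps)
qed

text \<open>Divisibility by G in the completion descends to R[[X]]: if G h = E F there, with
  G(0) = p^a and E(0) invertible modulo p^a, then every division step of the long division of F
  by G is exact.\<close>
lemma padic_fps_dvd:
  fixes p :: "'a::idom"
  assumes p0: "p \<noteq> 0" and G0: "G $ 0 = p ^ a"
    and E: "\<And>i. padic_compat p (\<lambda>n. E n $ i)" and h: "\<And>i. padic_compat p (\<lambda>n. h n $ i)"
    and E0: "p ^ a dvd y * E a $ 0 - 1"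
    and cong: "\<And>n. fps_cong (p ^ n) (G * h n) (E n * F)"
  shows "F = G * Abs_fps (fps_div_seq G F)"
proof -
  let ?H = "fps_div_seq G F"
  have "G $ 0 dvd F $ k - (\<Sum>j\<in>{1..k}. G $ j * ?H (k - j))" for k
  proof (induction k rule: less_induct)
    case (less k)
    define Ht where "Ht = fps_cutoff k (Abs_fps ?H)"
    define D where "D = F - G * Ht"
    have D_low: "D $ i = 0" if "i < k" for i
      using that fps_div_seq_nth[OF less[OF that]]
      by (simp add: D_def Ht_def mult.commute[of G] fps_cutoff_left_mult_nth)
    have T_cong: "fps_cong (p ^ n) (G * (h n - E n * Ht)) (E n * D)" for n
      using fps_cong_diff[OF cong[of n] fps_cong_refl[of _ "E n * (G * Ht)"]]
      by (simp add: D_def algebra_simps)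
    have T_compat: "padic_compat p (\<lambda>n. (h n - E n * Ht) $ i)" for i
      using h E by (simp add: fps_mult_nth padic_compat_diff padic_compat_sum padic_compat_mult)
    have "p ^ a dvd D $ k"
      using padic_fps_coeff_dvd[OF p0 G0 T_compat E0 D_low T_cong] .
    moreover have "(\<Sum>j\<in>{1..k}. G $ j * Ht $ (k - j)) = (\<Sum>j\<in>{1..k}. G $ j * ?H (k - j))"
      by (rule sum.cong) (auto simp: Ht_def)
    ultimately show ?case
      by (simp add: D_def G0 Ht_def fps_mult_nth_split)
  qed
  then show ?thesis
    by (intro fps_ext) (simp add: fps_div_seq_nth)
qed

lemma padic_compat_dvd_Suc:
  assumes "padic_compat p z" "p dvd z 1"
  shows "p dvd z (Suc n)"
proof -
  have "p dvd z (Suc n) - z 1"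
    using padic_compatD[OF assms(1), of 1 "Suc n"] by simp
  then have "p dvd (z (Suc n) - z 1) + z 1"
    using assms(2) by (rule dvd_add)
  then show ?thesis
    by simp
qed

lemma padic_factor_not_dvd_power:
  fixes p :: "'a::idom"
  assumes p: "prime_elem p" and c: "c = p ^ m * u" and u: "u dvd 1"
    and x: "padic_compat p x" and y: "padic_compat p y"
    and xy: "\<And>n. p ^ n dvd c - x n * y n" and y1: "p dvd y 1"
  shows "\<not> p ^ m dvd x m"
proof
  assume "p ^ m dvd x m"
  have "p ^ m dvd x (Suc m) - x m"
    using padic_compatD[OF x] by simp
  then have "p ^ m dvd (x (Suc m) - x m) + x m"
    using \<open>p ^ m dvd x m\<close> by (rule dvd_add)
  then have "p ^ m * p dvd x (Suc m) * y (Suc m)"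
    using padic_compat_dvd_Suc[OF y y1] by (simp add: mult_dvd_mono)
  then have "p ^ Suc m dvd x (Suc m) * y (Suc m)"
    by (simp only: power_Suc2)
  with xy have "p ^ Suc m dvd (c - x (Suc m) * y (Suc m)) + x (Suc m) * y (Suc m)"
    by (rule dvd_add)
  then have "p ^ m * p dvd p ^ m * u"
    by (simp add: c power_Suc2)
  then have "p dvd u"
    using p by (simp add: prime_elem_def)
  then show False
    using p u dvd_trans[of p u 1] by (simp add: prime_elem_def)
qed

lemma padic_factor_const_coeff:
  fixes p :: "'a::idom"
  assumes pid: "pid_ring TYPE('a)" and p: "prime_elem p" and c: "c = p ^ m * u" and u: "u dvd 1"
    and x: "padic_compat p x" and y: "padic_compat p y"
    and xy: "\<And>n. p ^ n dvd c - x n * y n" and x1: "p dvd x 1" and y1: "p dvd y 1"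
  shows "\<exists>a z v. 1 \<le> a \<and> a < m \<and> padic_compat p z \<and> (\<forall>n. p ^ n dvd x n * z n - p ^ a) \<and>
    p ^ a dvd v * z a - 1"
proof -
  have p0: "p \<noteq> 0"
    using p by (simp add: prime_elem_def)
  obtain a w where aw: "a < m" "padic_compat p w" "\<not> p dvd w 1"
    "\<And>n. p ^ n dvd x n - p ^ a * w n"
    using padic_compat_power_times_unit[OF p0 x padic_factor_not_dvd_power[OF assms(2-7) y1]]
    by blast
  have "a \<noteq> 0"
  proof
    assume "a = 0"
    then have "p dvd x 1 - w 1"
      using aw(4)[of 1] by simp
    with x1 have "p dvd x 1 - (x 1 - w 1)"
      by (rule dvd_diff)
    then show False
      using aw(3) by simp
  qed
  obtain z where z: "padic_compat p z" "\<And>n. p ^ n dvd w n * z n - 1"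
    using padic_unit_iff_not_dvd[OF pid p aw(2)] aw(3) unfolding padic_unit_def by blast
  have "p ^ n dvd (x n - p ^ a * w n) * z n + p ^ a * (w n * z n - 1)" for n
    using aw(4) z(2) by (intro dvd_add dvd_mult dvd_mult2)
  then have "p ^ n dvd x n * z n - p ^ a" for n
    by (simp add: algebra_simps)
  moreover have "p ^ a dvd w a * z a - 1"
    using z(2) .
  ultimately show ?thesis
    using \<open>a \<noteq> 0\<close> aw(1) z(1) by (intro exI[of _ a] exI[of _ z] exI[of _ "w a"]) (simp add: mult.commute)
qed

lemma not_dvd_one_power_mult:
  fixes p :: "'a::comm_semiring_1"
  assumes "\<not> p dvd 1" "1 \<le> k"
  shows "\<not> p ^ k * c dvd 1"
proof
  assume "p ^ k * c dvd 1"
  moreover have "p dvd p ^ k * c"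
    using assms(2) by (simp add: dvd_power dvd_mult2)
  ultimately show False
    using assms(1) dvd_trans by blast
qed

lemma fps_cong_factor_exchange:
  assumes "fps_cong q (g * E) G" "fps_cong q f (g * h)"
  shows "fps_cong q (G * h) (E * f)"
proof -
  have "fps_cong q (G * h) (g * E * h)"
    by (rule fps_cong_mult[OF fps_cong_sym[OF assms(1)] fps_cong_refl])
  also have "g * E * h = E * (g * h)"
    by (simp add: ac_simps)
  also have "fps_cong q \<dots> (E * f)"
    by (rule fps_cong_mult[OF fps_cong_refl fps_cong_sym[OF assms(2)]])
  finally show ?thesis .
qed

lemma padic_factors_imp_not_irreducible:
  fixes f :: "'a::idom poly"
  assumes pid: "pid_ring TYPE('a)" and p: "prime_elem p"
    and f0: "coeff f 0 = p ^ m * u" and u: "u dvd 1"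
    and g: "padic_poly p g" and h: "padic_poly p h" and fac: "padic_poly_factors p f g h"
    and g1: "p dvd coeff (g 1) 0" and h1: "p dvd coeff (h 1) 0"
  shows "\<not> irreducible (fps_of_poly f)"
proof
  assume irr: "irreducible (fps_of_poly f)"
  have p0: "p \<noteq> 0" and pnu: "\<not> p dvd 1"
    using p by (simp_all add: prime_elem_def)
  have gc: "\<And>j. padic_compat p (\<lambda>n. coeff (g n) j)" and hc: "\<And>j. padic_compat p (\<lambda>n. coeff (h n) j)"
    using g h by (simp_all add: padic_poly_def)
  have fac_cong: "fps_cong (p ^ n) (fps_of_poly f) (fps_of_poly (g n) * fps_of_poly (h n))" for n
    using fac unfolding fps_cong_def padic_poly_factors_def by (simp flip: fps_of_poly_mult)
  have "p ^ n dvd coeff (f - g n * h n) 0" for n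
    using fac unfolding padic_poly_factors_def by blast
  then have "p ^ n dvd coeff f 0 - coeff (g n) 0 * coeff (h n) 0" for n
    by (simp add: coeff_mult_0)
  then obtain a z v where a: "1 \<le> a" "a < m" and z: "padic_compat p z"
    and gz: "\<And>n. p ^ n dvd coeff (g n) 0 * z n - p ^ a" and v: "p ^ a dvd v * z a - 1"
    using padic_factor_const_coeff[OF pid p f0 u gc hc _ g1 h1] by blast
  obtain E G where E: "\<And>k. padic_compat p (\<lambda>n. E n $ k)" "\<And>n. E n $ 0 = z n"
    and G0: "G $ 0 = p ^ a" and gE: "\<And>n. fps_cong (p ^ n) (fps_of_poly (g n) * E n) G"
    using padic_poly_times_unit_fps[OF p0 gc z gz] by blast
  have cong: "fps_cong (p ^ n) (G * fps_of_poly (h n)) (E n * fps_of_poly f)" for n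
    using gE fac_cong by (rule fps_cong_factor_exchange)
  have "p ^ a dvd v * E a $ 0 - 1"
    using v E(2) by simp
  moreover have "padic_compat p (\<lambda>n. fps_of_poly (h n) $ i)" for i
    using hc by simp
  ultimately have "fps_of_poly f = G * Abs_fps (fps_div_seq G (fps_of_poly f))"
    using padic_fps_dvd[OF p0 G0 E(1) _ _ cong] by blast
  then obtain H where FGH: "fps_of_poly f = G * H" ..
  have G_nonunit: "\<not> G dvd 1"
    using not_dvd_one_power_mult[OF pnu a(1), of 1] by (simp add: fps_dvd_one_iff G0)
  have "p ^ a * H $ 0 = p ^ a * (p ^ (m - a) * u)"
    using FGH[THEN arg_cong[where f = "\<lambda>F. F $ 0"]] a(2) f0 G0
    by (simp flip: power_add mult.assoc)
  then have "H $ 0 = p ^ (m - a) * u"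
    using p0 by simp
  then have "\<not> H dvd 1"
    using not_dvd_one_power_mult[OF pnu, of "m - a" u] a(2) by (simp add: fps_dvd_one_iff)
  then show False
    using irreducibleD[OF irr FGH] G_nonunit by blast
qed

section \<open>Weierstrass preparation modulo powers of a prime\<close>

text \<open>Uniqueness of Weierstrass division by D \<equiv> X^e: the induction step divides the
  congruence modulo p^(n+1) by p^n and compares coefficients modulo p.\<close>
lemma fps_weierstrass_division_unique:
  fixes D W R :: "'a::idom fps"
  assumes p0: "p \<noteq> 0" and D: "fps_cong p D (fps_X ^ e)" and R: "\<And>i. e \<le> i \<Longrightarrow> R $ i = 0"
    and DWR: "fps_cong (p ^ n) (D * W) R"
  shows "fps_cong (p ^ n) W 0 \<and> fps_cong (p ^ n) R 0"
  using R DWR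
proof (induction n arbitrary: W R)
  case 0
  then show ?case
    by simp
next
  case (Suc n)
  have "fps_cong (p ^ n) (D * W) R"
    using Suc.prems(2) by (rule fps_cong_power_le[rotated]) simp
  then have "fps_cong (p ^ n) W 0 \<and> fps_cong (p ^ n) R 0"
    using Suc.IH[where W = W and R = R] Suc.prems(1) by blast
  then have "fps_const (p ^ n) dvd W" "fps_const (p ^ n) dvd R"
    by (simp_all only: fps_cong_0_iff_dvd)
  then obtain W' R' where W': "W = fps_const (p ^ n) * W'" and R': "R = fps_const (p ^ n) * R'"
    by (elim dvdE)
  have R'0: "R' $ i = 0" if "e \<le> i" for i
    using Suc.prems(1)[OF that] p0 by (simp add: R')
  have "D * W - R = fps_const (p ^ n) * (D * W' - R')"
    by (simp add: W' R' algebra_simps)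
  moreover have "fps_cong (p ^ Suc n) (D * W - R) 0"
    using Suc.prems(2) by (rule fps_cong_iff_diff[THEN iffD1])
  ultimately have "fps_cong (p ^ n * p) (fps_const (p ^ n) * (D * W' - R')) 0"
    by (simp only: power_Suc2)
  moreover have "p ^ n \<noteq> 0"
    using p0 by simp
  ultimately have DWR': "fps_cong p (D * W' - R') 0"
    by (rule fps_cong_mult_const_cancel[rotated])
  then have DWR'': "fps_cong p (D * W') R'"
    by (rule fps_cong_iff_diff[THEN iffD2])
  have "fps_cong p (fps_X ^ e * W') (D * W')"
    by (rule fps_cong_mult[OF fps_cong_sym[OF D] fps_cong_refl])
  also note DWR''
  finally have W'0: "fps_cong p W' 0"
    using R'0 by (rule fps_cong_X_power_mult_cancel)
  note fps_cong_sym[OF DWR'']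
  also have "D * W' = W' * D"
    by (rule mult.commute)
  also have "fps_cong p (W' * D) 0"
    using W'0 by (rule fps_cong_0_mult)
  finally have "fps_cong p R' 0" .
  then have "fps_cong (p ^ n * p) (fps_const (p ^ n) * R') 0" "fps_cong (p ^ n * p) (fps_const (p ^ n) * W') 0"
    using W'0 by (simp_all only: fps_cong_mult_const)
  then show ?case
    unfolding W' R' by (simp only: power_Suc2)
qed

lemma fps_inverse_mod_prime:
  fixes U :: "'a::idom fps"
  assumes pid: "pid_ring TYPE('a)" and p: "prime_elem p" and U: "\<not> p dvd U $ 0"
  shows "\<exists>V. fps_cong p (U * V) 1"
proof -
  obtain s t where st: "s * p ^ 1 + t * U $ 0 = 1"
    using pid_ring_bezout_prime_power[OF pid p U] by blast
  define U' where "U' = fps_const t * U + fps_const (s * p)"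
  have "U' $ 0 = 1"
    using st by (simp add: U'_def algebra_simps)
  then have "U' dvd 1"
    by (simp add: fps_dvd_one_iff)
  then obtain V' where V': "1 = U' * V'"
    by (elim dvdE)
  have "U * (fps_const t * V') = 1 - fps_const p * (fps_const s * V')"
    using V' by (simp add: U'_def algebra_simps flip: fps_const_mult)
  then have "fps_cong p (U * (fps_const t * V')) 1"
    by (simp add: fps_cong_def)
  then show ?thesis ..
qed

definition weierstrass_approx :: "'a::comm_ring_1 \<Rightarrow> nat \<Rightarrow> nat \<Rightarrow> 'a fps \<Rightarrow> 'a poly \<Rightarrow> 'a fps \<Rightarrow> bool"
  where "weierstrass_approx p d e A P U \<longleftrightarrow> degree P \<le> d \<and> coeff P d = 1 \<and>
    fps_cong p (fps_of_poly P) (fps_X ^ d) \<and> \<not> p dvd U $ 0 \<and> fps_cong (p ^ e) A (U * fps_of_poly P)"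

lemma weierstrass_approx_degree:
  assumes "weierstrass_approx p d e A P U"
  shows "degree P = d" "lead_coeff P = 1"
proof -
  have "degree P \<le> d" "coeff P d = 1"
    using assms by (auto simp: weierstrass_approx_def)
  moreover from this have "d \<le> degree P"
    by (intro le_degree) simp
  ultimately show "degree P = d" "lead_coeff P = 1"
    by auto
qed

lemma weierstrass_approx_base:
  assumes "\<not> p dvd A $ d" "\<And>i. i < d \<Longrightarrow> p dvd A $ i"
  shows "weierstrass_approx p d 1 A (monom 1 d) (fps_shift d A)"
proof -
  have "fps_cong p A (fps_shift d A * fps_X ^ d)"
    using assms(2) by (simp add: fps_cong_def fps_X_power_mult_right_nth)
  then show ?thesis
    using assms(1) by (simp add: weierstrass_approx_def degree_monom_eq fps_of_poly_monom)
qed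

lemma fps_cong_lift_step:
  fixes p :: "'a::comm_ring_1"
  assumes e: "1 \<le> e" and AE: "A - U * P = fps_const (p ^ e) * E"
    and P: "fps_cong p P (fps_X ^ d)" and E: "fps_cong p E (u * fps_X ^ d + U * Q)"
  shows "fps_cong (p ^ Suc e) A ((U + fps_const (p ^ e) * u) * (P + fps_const (p ^ e) * Q))"
proof -
  have "fps_cong p (E - u * P - U * Q) (u * fps_X ^ d + U * Q - u * fps_X ^ d - U * Q)"
    by (intro fps_cong_diff fps_cong_mult E P fps_cong_refl)
  then have "fps_cong (p ^ e * p) (fps_const (p ^ e) * (E - u * P - U * Q)) 0"
    by (intro fps_cong_mult_const) simp
  moreover have "fps_cong (p ^ e * p) (fps_const (p ^ e) * fps_const (p ^ e) * (u * Q)) 0"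
  proof -
    have "p ^ e * p dvd p ^ e * p ^ e"
      using e by (intro mult_dvd_mono dvd_refl) (simp add: dvd_power)
    then have "p ^ e * p dvd (p ^ e * p ^ e) * (u * Q) $ i" for i
      by (rule dvd_mult2)
    then show ?thesis
      by (simp add: fps_cong_def mult.assoc)
  qed
  ultimately have "fps_cong (p ^ e * p) (fps_const (p ^ e) * (E - u * P - U * Q) -
      fps_const (p ^ e) * fps_const (p ^ e) * (u * Q)) (0 - 0)"
    by (rule fps_cong_diff)
  moreover have "A - (U + fps_const (p ^ e) * u) * (P + fps_const (p ^ e) * Q) =
      fps_const (p ^ e) * (E - u * P - U * Q) - fps_const (p ^ e) * fps_const (p ^ e) * (u * Q)"
    using AE by (simp add: algebra_simps)
  ultimately show ?thesis
    by (simp add: fps_cong_iff_diff[of _ A] mult.commute[of "p ^ e" p])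
qed

lemma weierstrass_approx_update:
  fixes p :: "'a::idom"
  assumes W: "weierstrass_approx p d e A P U" and e: "1 \<le> e"
    and q: "\<And>i. d \<le> i \<Longrightarrow> coeff q i = 0"
    and A: "fps_cong (p ^ Suc e) A ((U + fps_const (p ^ e) * u) * fps_of_poly (P + smult (p ^ e) q))"
  shows "weierstrass_approx p d (Suc e) A (P + smult (p ^ e) q) (U + fps_const (p ^ e) * u) \<and>
    fps_cong (p ^ e) (fps_of_poly (P + smult (p ^ e) q)) (fps_of_poly P)"
proof -
  note W' = W[unfolded weierstrass_approx_def]
  have "degree (smult (p ^ e) q) \<le> d"
    using q by (intro order_trans[OF degree_smult_le] degree_le) auto
  then have "degree (P + smult (p ^ e) q) \<le> d"
    using W' by (intro degree_add_le) simp_all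
  moreover have "coeff (P + smult (p ^ e) q) d = 1"
    using W' q by simp
  moreover have P': "fps_cong (p ^ e) (fps_of_poly (P + smult (p ^ e) q)) (fps_of_poly P)"
    by (simp add: fps_cong_def fps_of_poly_add fps_of_poly_smult)
  moreover have "fps_cong p (fps_of_poly (P + smult (p ^ e) q)) (fps_X ^ d)"
    using fps_cong_power_le[OF e P'] W' by (auto intro: fps_cong_trans)
  moreover have "\<not> p dvd (U + fps_const (p ^ e) * u) $ 0"
  proof
    assume "p dvd (U + fps_const (p ^ e) * u) $ 0"
    moreover have "p dvd p ^ e * u $ 0"
      using e by (simp add: dvd_power dvd_mult2)
    ultimately have "p dvd (U + fps_const (p ^ e) * u) $ 0 - p ^ e * u $ 0"
      by (rule dvd_diff)
    then show False
      using W' by simp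
  qed
  ultimately show ?thesis
    using A by (simp add: weierstrass_approx_def)
qed

lemma weierstrass_approx_step:
  fixes A U :: "'a::idom fps"
  assumes pid: "pid_ring TYPE('a)" and p: "prime_elem p" and e: "1 \<le> e"
    and W: "weierstrass_approx p d e A P U"
  shows "\<exists>P' U'. weierstrass_approx p d (Suc e) A P' U' \<and>
    fps_cong (p ^ e) (fps_of_poly P') (fps_of_poly P)"
proof -
  note W' = W[unfolded weierstrass_approx_def]
  obtain E where E: "A - U * fps_of_poly P = fps_const (p ^ e) * E"
    using W' by (auto simp: fps_cong_iff_diff[of _ A] fps_cong_0_iff_dvd elim: dvdE)
  obtain V where V: "fps_cong p (U * V) 1"
    using fps_inverse_mod_prime[OF pid p] W' by blast
  define q where "q = (\<Sum>i<d. monom ((V * E) $ i) i)"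
  define u where "u = U * fps_shift d (V * E)"
  have q: "fps_of_poly q = fps_cutoff d (V * E)"
    by (simp add: q_def fps_eq_iff coeff_sum)
  have "fps_cong p (1 * E) (U * V * E)"
    by (intro fps_cong_mult fps_cong_sym[OF V] fps_cong_refl)
  also have "U * V * E = U * (fps_X ^ d * fps_shift d (V * E) + fps_cutoff d (V * E))"
    by (simp only: fps_shift_cutoff' mult.assoc)
  also have "\<dots> = u * fps_X ^ d + U * fps_of_poly q"
    by (simp add: u_def q algebra_simps)
  finally have "fps_cong (p ^ Suc e) A
      ((U + fps_const (p ^ e) * u) * (fps_of_poly P + fps_const (p ^ e) * fps_of_poly q))"
    using E W' e by (intro fps_cong_lift_step) simp_all
  then have "fps_cong (p ^ Suc e) A ((U + fps_const (p ^ e) * u) * fps_of_poly (P + smult (p ^ e) q))"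
    by (simp add: fps_of_poly_add fps_of_poly_smult)
  moreover have "\<And>i. d \<le> i \<Longrightarrow> coeff q i = 0"
    by (simp add: q_def coeff_sum)
  ultimately show ?thesis
    using weierstrass_approx_update[OF W e] by blast
qed

lemma weierstrass_approx_seq:
  fixes A :: "'a::idom fps"
  assumes pid: "pid_ring TYPE('a)" and p: "prime_elem p"
    and nd: "\<not> p dvd A $ d" and low: "\<And>i. i < d \<Longrightarrow> p dvd A $ i"
  shows "\<exists>P U. \<forall>n. weierstrass_approx p d (Suc n) A (P n) (U n) \<and>
    fps_cong (p ^ Suc n) (fps_of_poly (P (Suc n))) (fps_of_poly (P n))"
proof -
  have "\<exists>PU'. weierstrass_approx p d (Suc (Suc n)) A (fst PU') (snd PU') \<and>
      fps_cong (p ^ Suc n) (fps_of_poly (fst PU')) (fps_of_poly (fst PU))"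
    if "weierstrass_approx p d (Suc n) A (fst PU) (snd PU)" for n PU
    using weierstrass_approx_step[OF pid p _ that] by auto
  then obtain next_approx where next_approx: "\<And>n PU.
      weierstrass_approx p d (Suc n) A (fst PU) (snd PU) \<Longrightarrow>
      weierstrass_approx p d (Suc (Suc n)) A (fst (next_approx n PU)) (snd (next_approx n PU)) \<and>
      fps_cong (p ^ Suc n) (fps_of_poly (fst (next_approx n PU))) (fps_of_poly (fst PU))"
    by metis
  define PU where "PU = rec_nat (monom 1 d, fps_shift d A) next_approx"
  have approx: "weierstrass_approx p d (Suc n) A (fst (PU n)) (snd (PU n))" for n
  proof (induction n)
    case 0
    then show ?case
      using weierstrass_approx_base[OF nd low] by (simp add: PU_def)
  next
    case (Suc n)
    then show ?case
      using next_approx by (simp add: PU_def)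
  qed
  have "fps_cong (p ^ Suc n) (fps_of_poly (fst (PU (Suc n)))) (fps_of_poly (fst (PU n)))" for n
    using next_approx[OF approx[of n]] by (simp add: PU_def)
  then show ?thesis
    using approx by (intro exI[of _ "\<lambda>n. fst (PU n)"] exI[of _ "\<lambda>n. snd (PU n)"]) blast
qed

lemma pid_ring_fps_content:
  fixes A :: "'a::idom fps"
  assumes pid: "pid_ring TYPE('a)" and p: "\<not> p dvd 1" and A: "A \<noteq> 0"
  shows "\<exists>k A'. A = fps_const (p ^ k) * A' \<and> (\<exists>i. \<not> p dvd A' $ i)"
proof -
  obtain i0 where "A $ i0 \<noteq> 0"
    using A by (metis fps_nonzero_nth)
  then obtain j where "\<not> p ^ j dvd A $ i0"
    using pid_ring_not_dvd_power[OF pid _ p] by blast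
  then have "\<exists>k. \<not> \<not> (\<forall>i. p ^ k dvd A $ i) \<and> \<not> (\<forall>i. p ^ Suc k dvd A $ i)"
    by (intro exists_least_lemma) auto
  then obtain k i where k: "\<forall>i. p ^ k dvd A $ i" and i: "\<not> p ^ Suc k dvd A $ i"
    by blast
  then have "fps_const (p ^ k) dvd A"
    by (simp add: fps_cong_def flip: fps_cong_0_iff_dvd)
  then obtain A' where A': "A = fps_const (p ^ k) * A'"
    by (elim dvdE)
  have "\<not> p dvd A' $ i"
  proof
    assume "p dvd A' $ i"
    then have "p ^ k * p dvd p ^ k * A' $ i"
      by (rule mult_dvd_mono[OF dvd_refl])
    then show False
      using i A' by (simp add: power_Suc2)
  qed
  then show ?thesis
    using A' by blast
qed

lemma monic_poly_division:
  fixes D f :: "'a::idom poly"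
  assumes "lead_coeff D = 1"
  shows "\<exists>S R. f = D * S + R \<and> (\<forall>i\<ge>degree D. coeff R i = 0) \<and> degree S \<le> degree f"
proof -
  have D0: "D \<noteq> 0"
    using assms by auto
  obtain S R where SR: "pseudo_divmod f D = (S, R)"
    by (cases "pseudo_divmod f D") auto
  have eq: "f = D * S + R"
    using pseudo_divmod(1)[OF D0 SR] assms by simp
  have R: "R = 0 \<or> degree R < degree D"
    using pseudo_divmod(2)[OF D0 SR] .
  have "degree S \<le> degree f"
  proof (cases "S = 0 \<or> R = 0")
    case True
    then show ?thesis
      using eq D0 by (cases "S = 0") (auto simp: degree_mult_eq)
  next
    case False
    then have "degree R < degree (D * S)"
      using R D0 by (simp add: degree_mult_eq)
    then show ?thesis
      using eq D0 False by (simp add: degree_add_eq_left degree_mult_eq)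
  qed
  moreover have "\<forall>i\<ge>degree D. coeff R i = 0"
    using R by (auto intro: coeff_eq_0)
  ultimately show ?thesis
    using eq by blast
qed

lemma weierstrass_approx_division:
  fixes f :: "'a::idom poly"
  assumes p0: "p \<noteq> 0" and W: "weierstrass_approx p d e A P U" and f: "fps_of_poly f = A * B"
  shows "\<exists>S R. f = P * S + R \<and> degree S \<le> degree f \<and> fps_cong (p ^ e) (fps_of_poly R) 0 \<and>
    fps_cong (p ^ e) (fps_of_poly S) (U * B)"
proof -
  obtain S R where SR: "f = P * S + R" "\<forall>i\<ge>d. coeff R i = 0" "degree S \<le> degree f"
    using monic_poly_division[of P f] weierstrass_approx_degree[OF W] by metis
  have "fps_cong (p ^ e) (A * B - fps_of_poly P * fps_of_poly S)
      (U * fps_of_poly P * B - fps_of_poly P * fps_of_poly S)"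
    using W by (intro fps_cong_diff fps_cong_mult fps_cong_refl) (simp add: weierstrass_approx_def)
  moreover have "A * B = fps_of_poly P * fps_of_poly S + fps_of_poly R"
    using SR(1) f by (simp add: fps_of_poly_add fps_of_poly_mult)
  then have "A * B - fps_of_poly P * fps_of_poly S = fps_of_poly R"
    by simp
  moreover have "U * fps_of_poly P * B - fps_of_poly P * fps_of_poly S =
      fps_of_poly P * (U * B - fps_of_poly S)"
    by (simp add: algebra_simps)
  ultimately have "fps_cong (p ^ e) (fps_of_poly P * (U * B - fps_of_poly S)) (fps_of_poly R)"
    by (simp add: fps_cong_sym)
  moreover have "fps_cong p (fps_of_poly P) (fps_X ^ d)"
    using W by (simp add: weierstrass_approx_def)
  moreover have "\<And>i. d \<le> i \<Longrightarrow> fps_of_poly R $ i = 0"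
    using SR(2) by simp
  ultimately have "fps_cong (p ^ e) (U * B - fps_of_poly S) 0 \<and> fps_cong (p ^ e) (fps_of_poly R) 0"
    by (intro fps_weierstrass_division_unique[OF p0])
  moreover have "fps_cong (p ^ e) (fps_of_poly S) (U * B)"
    using fps_cong_iff_diff[THEN iffD2, OF calculation[THEN conjunct1]] by (rule fps_cong_sym)
  ultimately show ?thesis
    using SR(1,3) by blast
qed

lemma pid_ring_fps_factor_weierstrass:
  fixes A :: "'a::idom fps"
  assumes pid: "pid_ring TYPE('a)" and p: "prime_elem p" and A: "A \<noteq> 0" and pA: "p dvd A $ 0"
  shows "\<exists>k d A' P U. A = fps_const (p ^ k) * A' \<and>
    (\<forall>n. weierstrass_approx p d (Suc n) A' (P n) (U n) \<and>
      fps_cong (p ^ Suc n) (fps_of_poly (P (Suc n))) (fps_of_poly (P n)) \<and>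
      p dvd p ^ k * coeff (P n) 0)"
proof -
  have pnu: "\<not> p dvd 1"
    using p by (simp add: prime_elem_def)
  obtain k A' i where kA: "A = fps_const (p ^ k) * A'" and i: "\<not> p dvd A' $ i"
    using pid_ring_fps_content[OF pid pnu A] by blast
  define d where "d = (LEAST i. \<not> p dvd A' $ i)"
  have nd: "\<not> p dvd A' $ d"
    unfolding d_def using i by (rule LeastI)
  have low: "\<And>j. j < d \<Longrightarrow> p dvd A' $ j"
    unfolding d_def using not_less_Least by blast
  obtain P U where PU: "\<And>n. weierstrass_approx p d (Suc n) A' (P n) (U n) \<and>
      fps_cong (p ^ Suc n) (fps_of_poly (P (Suc n))) (fps_of_poly (P n))"
    using weierstrass_approx_seq[OF pid p nd low] by blast
  have "p dvd p ^ k * coeff (P n) 0" for n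
  proof (cases k)
    case 0
    then have "A' = A"
      using kA by simp
    have "d \<noteq> 0"
    proof
      assume "d = 0"
      then show False
        using nd pA \<open>A' = A\<close> by simp
    qed
    moreover have "fps_cong p (fps_of_poly (P n)) (fps_X ^ d)"
      using PU[of n] by (simp add: weierstrass_approx_def)
    ultimately have "p dvd coeff (P n) 0"
      by (auto simp: fps_cong_def dest: spec[of _ 0])
    then show ?thesis
      by (rule dvd_mult)
  qed (simp add: dvd_mult2)
  then show ?thesis
    using kA PU by blast
qed

lemma fps_weierstrass_quotients_cong:
  fixes p :: "'a::idom"
  assumes p0: "p \<noteq> 0" and P: "fps_cong p (P n) (fps_X ^ d)"
    and P_step: "fps_cong (p ^ n) (P (Suc n)) (P n)"
    and SR: "\<And>n. F = P n * S n + R n" and R: "\<And>n. fps_cong (p ^ n) (R n) 0"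
  shows "fps_cong (p ^ n) (S (Suc n)) (S n)"
proof -
  have "P n * (S (Suc n) - S n) = (P n - P (Suc n)) * S (Suc n) + (R n - R (Suc n))"
    using SR[of n] SR[of "Suc n"] by (simp add: algebra_simps)
  moreover have "fps_cong (p ^ n) (P n - P (Suc n)) 0"
    using fps_cong_sym[OF P_step] by (rule fps_cong_iff_diff[THEN iffD1])
  moreover have "fps_cong (p ^ n) (R (Suc n)) 0"
    using R[of "Suc n"] by (rule fps_cong_power_le[rotated]) simp
  ultimately have "fps_cong (p ^ n) (P n * (S (Suc n) - S n)) (0 * S (Suc n) + (0 - 0))"
    using R[of n] by (simp only:) (intro fps_cong_add fps_cong_mult fps_cong_diff fps_cong_refl)
  then have "fps_cong (p ^ n) (S (Suc n) - S n) 0"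
    using fps_weierstrass_division_unique[OF p0 P, where R = 0 and W = "S (Suc n) - S n"]
    by simp
  then show ?thesis
    by (rule fps_cong_iff_diff[THEN iffD2])
qed

lemma padic_polyI:
  assumes "\<And>n. degree (g n) \<le> d"
    and "\<And>n. fps_cong (p ^ n) (fps_of_poly (g (Suc n))) (fps_of_poly (g n))"
  shows "padic_poly p g"
  unfolding padic_poly_def using assms by (auto simp: fps_cong_def intro!: padic_compat_SucI)

lemma padic_poly_weierstrass_quotients:
  fixes p :: "'a::idom"
  assumes p0: "p \<noteq> 0" and P: "\<And>n. fps_cong p (fps_of_poly (P n)) (fps_X ^ d)"
    and P_step: "\<And>n. fps_cong (p ^ n) (fps_of_poly (P (Suc n))) (fps_of_poly (P n))"
    and SR: "\<And>n. f = P n * S n + R n" and R: "\<And>n. fps_cong (p ^ n) (fps_of_poly (R n)) 0"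
    and deg: "\<And>n. degree (S n) \<le> b"
  shows "padic_poly p S"
proof (rule padic_polyI[OF deg])
  show "fps_cong (p ^ n) (fps_of_poly (S (Suc n))) (fps_of_poly (S n))" for n
  proof (rule fps_weierstrass_quotients_cong[OF p0 P P_step])
    show "fps_of_poly f = fps_of_poly (P n) * fps_of_poly (S n) + fps_of_poly (R n)" for n
      using SR[of n] by (simp flip: fps_of_poly_mult fps_of_poly_add)
  qed (rule R)
qed

lemma fps_of_poly_eq_const_mult:
  fixes f :: "'a::idom poly"
  assumes f: "fps_of_poly f = fps_const c * G" and c: "c \<noteq> 0"
  shows "\<exists>f'. f = smult c f' \<and> fps_of_poly f' = G"
proof -
  define f' where "f' = (\<Sum>i\<le>degree f. monom (G $ i) i)"
  have fG: "coeff f i = c * G $ i" for i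
    using f[THEN arg_cong[where f = "\<lambda>F. F $ i"]] by simp
  have "fps_of_poly f' = G"
  proof (rule fps_ext)
    fix i
    have "i > degree f \<Longrightarrow> G $ i = 0"
      using fG[of i] c by (simp add: coeff_eq_0)
    then show "fps_of_poly f' $ i = G $ i"
      by (auto simp: f'_def coeff_sum)
  qed
  moreover from this have "f = smult c f'"
    by (intro poly_eqI) (metis fG coeff_smult fps_of_poly_nth)
  ultimately show ?thesis
    by blast
qed

lemma fps_cong_dvd_nth: "fps_cong q A B \<Longrightarrow> q dvd B $ i \<Longrightarrow> q dvd A $ i"
  unfolding fps_cong_def by (metis dvd_add fps_sub_nth diff_add_cancel)

lemma fps_factors_imp_padic_factors:
  fixes f :: "'a::idom poly" and A B :: "'a fps"
  assumes pid: "pid_ring TYPE('a)" and p: "prime_elem p" and FAB: "fps_of_poly f = A * B"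
    and pA: "p dvd A $ 0" and pB: "p dvd B $ 0" and f0: "coeff f 0 \<noteq> 0"
  shows "\<exists>g h. padic_poly p g \<and> padic_poly p h \<and> padic_poly_factors p f g h \<and>
    p dvd coeff (g 1) 0 \<and> p dvd coeff (h 1) 0"
proof -
  have p0: "p \<noteq> 0"
    using p by (simp add: prime_elem_def)
  have "A \<noteq> 0"
    using FAB f0 by (auto simp flip: fps_of_poly_nth)
  then obtain k d A' P U where kA: "A = fps_const (p ^ k) * A'"
    and W: "\<And>n. weierstrass_approx p d (Suc n) A' (P n) (U n)"
    and P_step: "\<And>n. fps_cong (p ^ Suc n) (fps_of_poly (P (Suc n))) (fps_of_poly (P n))"
    and P0: "\<And>n. p dvd p ^ k * coeff (P n) 0"
    using pid_ring_fps_factor_weierstrass[OF pid p _ pA] by blast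
  obtain f' where f': "f = smult (p ^ k) f'" "fps_of_poly f' = A' * B"
    using fps_of_poly_eq_const_mult[of f "p ^ k" "A' * B"] FAB kA p0 by (auto simp: mult.assoc)
  obtain S R where SR: "\<And>n. f' = P n * S n + R n" "\<And>n. degree (S n) \<le> degree f'"
    and R: "\<And>n. fps_cong (p ^ Suc n) (fps_of_poly (R n)) 0"
    and S: "\<And>n. fps_cong (p ^ Suc n) (fps_of_poly (S n)) (U n * B)"
    using weierstrass_approx_division[OF p0 W f'(2)] by metis
  define g where "g n = smult (p ^ k) (P n)" for n
  have "padic_poly_factors p f g S"
    unfolding padic_poly_factors_def
  proof (intro allI)
    fix n i
    have "f - g n * S n = smult (p ^ k) (R n)"
      using SR(1)[of n] by (simp add: f'(1) g_def algebra_simps smult_add_right)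
    moreover have "p ^ n dvd coeff (R n) i"
      using R[of n] by (auto simp: fps_cong_def intro: dvd_mult_right)
    ultimately show "p ^ n dvd coeff (f - g n * S n) i"
      by (simp add: dvd_mult)
  qed
  moreover have "padic_poly p g"
  proof (rule padic_polyI)
    show "degree (g n) \<le> d" for n
      using degree_smult_le[of "p ^ k" "P n"] weierstrass_approx_degree(1)[OF W[of n]]
      by (simp add: g_def)
    show "fps_cong (p ^ n) (fps_of_poly (g (Suc n))) (fps_of_poly (g n))" for n
      using fps_cong_mult[OF fps_cong_refl[of _ "fps_const (p ^ k)"] P_step[of n]]
      by (intro fps_cong_power_le[of n "Suc n"]) (simp_all add: g_def fps_of_poly_smult)
  qed
  moreover have "padic_poly p S"
  proof (rule padic_poly_weierstrass_quotients[OF p0 _ _ SR(1) _ SR(2)])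
    show "fps_cong p (fps_of_poly (P n)) (fps_X ^ d)" for n
      using W[of n] by (simp add: weierstrass_approx_def)
    show "fps_cong (p ^ n) (fps_of_poly (P (Suc n))) (fps_of_poly (P n))" for n
      using P_step[of n] by (rule fps_cong_power_le[rotated]) simp
    show "fps_cong (p ^ n) (fps_of_poly (R n)) 0" for n
      using R[of n] by (auto intro: fps_cong_power_le[of n "Suc n" p])
  qed
  moreover have "p dvd coeff (g 1) 0"
    using P0[of 1] by (simp add: g_def)
  moreover have "p dvd coeff (S 1) 0"
  proof -
    have "fps_cong p (fps_of_poly (S 1)) (U 1 * B)"
      using S[of 1] fps_cong_power_le[of 1 "Suc 1" p] by simp
    moreover have "p dvd (U 1 * B) $ 0"
      using pB by (simp add: dvd_mult)
    ultimately show ?thesis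
      using fps_cong_dvd_nth by fastforce
  qed
  ultimately show ?thesis
    by (intro exI[of _ g] exI[of _ S]) simp
qed

section \<open>The irreducibility criterion\<close>

definition padic_unit_const_factor :: "'a::comm_ring_1 \<Rightarrow> 'a poly \<Rightarrow> bool" where
  "padic_unit_const_factor p f \<longleftrightarrow> (\<forall>g h. padic_poly p g \<longrightarrow> padic_poly p h \<longrightarrow>
     padic_poly_factors p f g h \<longrightarrow>
     padic_unit p (\<lambda>n. coeff (g n) 0) \<or> padic_unit p (\<lambda>n. coeff (h n) 0))"

lemma fps_irreducible_if_unit_nth_1:
  fixes F :: "'a::idom fps"
  assumes F0: "F $ 0 = 0" and F1: "F $ 1 dvd 1"
  shows "irreducible F"
proof (rule irreducibleI)
  define G where "G = fps_shift 1 F"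
  have FG: "F = fps_X * G"
    unfolding G_def using F0 by (rule fps_eq_fps_X_times_shift)
  have G: "G dvd 1"
    using F1 by (simp add: G_def fps_dvd_one_iff)
  show "F \<noteq> 0"
    using F1 by auto
  show "\<not> F dvd 1"
    using F0 by (simp add: fps_dvd_one_iff)
  have "b dvd 1" if ab: "F = a * b" and a0: "a $ 0 = 0" for a b
  proof -
    have "fps_X * G = fps_X * (fps_shift 1 a * b)"
      using ab FG fps_eq_fps_X_times_shift[OF a0] by (metis mult.assoc)
    then have "b dvd G"
      by simp
    then show ?thesis
      using G by (rule dvd_trans)
  qed
  moreover fix a b assume "F = a * b"
  moreover from this have "a $ 0 = 0 \<or> b $ 0 = 0"
    using F0 by simp
  ultimately show "a dvd 1 \<or> b dvd 1"
    by (metis mult.commute)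
qed

lemma fps_irreducible_imp_unit_nth_1:
  fixes F :: "'a::idom fps"
  assumes "irreducible F" "F $ 0 = 0"
  shows "F $ 1 dvd 1"
proof -
  have "fps_X dvd (1 :: 'a fps) \<or> fps_shift 1 F dvd 1"
    using assms(1) fps_eq_fps_X_times_shift[OF assms(2)] by (rule irreducibleD)
  then show ?thesis
    by (simp add: fps_dvd_one_iff)
qed

lemma padic_unit_const_factor_imp_irreducible:
  fixes f :: "'a::idom poly"
  assumes pid: "pid_ring TYPE('a)" and p: "prime_elem p" and m: "1 \<le> m"
    and f0: "coeff f 0 dvd p ^ m" "p ^ m dvd coeff f 0"
    and unit_factor: "padic_unit_const_factor p f"
  shows "irreducible (fps_of_poly f)"
proof (rule irreducibleI)
  have "coeff f 0 \<noteq> 0"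
    using f0(1) p by (auto simp: prime_elem_def)
  then show "fps_of_poly f \<noteq> 0"
    by (metis fps_of_poly_nth fps_zero_nth)
  have "\<not> p ^ m dvd 1"
    using not_dvd_one_power_mult[OF _ m, of p 1] p by (simp add: prime_elem_def)
  then show "\<not> fps_of_poly f dvd 1"
    using f0(2) dvd_trans by (auto simp: fps_dvd_one_iff)
  fix A B assume AB: "fps_of_poly f = A * B"
  show "A dvd 1 \<or> B dvd 1"
  proof (rule ccontr)
    assume "\<not> (A dvd 1 \<or> B dvd 1)"
    moreover have "A $ 0 dvd p ^ m" "B $ 0 dvd p ^ m"
      using AB[THEN arg_cong[where f = "\<lambda>F. F $ 0"]] f0(1) by (auto intro: dvd_trans)
    ultimately have "p dvd A $ 0" "p dvd B $ 0"
      using pid_ring_nonunit_dvd_prime_power[OF pid p] by (auto simp: fps_dvd_one_iff)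
    then obtain g h where gh: "padic_poly p g" "padic_poly p h" "padic_poly_factors p f g h"
      "p dvd coeff (g 1) 0" "p dvd coeff (h 1) 0"
      using fps_factors_imp_padic_factors[OF pid p AB] \<open>coeff f 0 \<noteq> 0\<close> by blast
    then show False
      using unit_factor padic_unit_iff_not_dvd[OF pid p]
      by (auto simp: padic_unit_const_factor_def padic_poly_def)
  qed
qed

lemma fps_irreducible_nth_0_cofactor_unit:
  fixes F :: "'a::idom fps"
  assumes pid: "pid_ring TYPE('a)" and irr: "irreducible F" and p: "prime_elem p"
    and F0: "F $ 0 = p ^ m * u" and pu: "\<not> p dvd u" and m: "1 \<le> m"
  shows "u dvd 1"
proof (rule ccontr)
  assume u: "\<not> u dvd 1"
  obtain s t where "s * p ^ m + t * u = 1"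
    using pid_ring_bezout_prime_power[OF pid p pu] by blast
  then obtain G H where GH: "F = G * H" "G $ 0 = p ^ m" "H $ 0 = u"
    using fps_factor_coprime_const[OF F0] by blast
  have "G dvd 1 \<or> H dvd 1"
    using irr GH(1) by (rule irreducibleD)
  moreover have "\<not> p dvd 1"
    using p by (simp add: prime_elem_def)
  ultimately show False
    using GH(2,3) not_dvd_one_power_mult[OF _ m, of p 1] u by (auto simp: fps_dvd_one_iff)
qed

lemma irreducible_imp_padic_unit_const_factor:
  fixes f :: "'a::idom poly"
  assumes pid: "pid_ring TYPE('a)" and irr: "irreducible (fps_of_poly f)" and f0: "coeff f 0 \<noteq> 0"
  shows "\<exists>p m. prime_elem p \<and> 1 \<le> m \<and> coeff f 0 dvd p ^ m \<and> p ^ m dvd coeff f 0 \<and>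
    padic_unit_const_factor p f"
proof -
  have "\<not> coeff f 0 dvd 1"
    using irr by (auto simp: irreducible_def fps_dvd_one_iff)
  then obtain p where p: "prime_elem p" "p dvd coeff f 0"
    using pid_ring_prime_factor[OF pid f0] by blast
  have pnu: "\<not> p dvd 1"
    using p by (simp add: prime_elem_def)
  obtain m u where mu: "coeff f 0 = p ^ m * u" and pu: "\<not> p dvd u"
    using pid_ring_power_factor[OF pid f0 pnu] by blast
  have m: "1 \<le> m"
    using p(2) pu by (cases m) (auto simp: mu)
  have u: "u dvd 1"
    using fps_irreducible_nth_0_cofactor_unit[OF pid irr p(1) _ pu m] mu by simp
  have unit_factor: "padic_unit_const_factor p f"
    unfolding padic_unit_const_factor_def
  proof (intro allI impI)
    fix g h assume gh: "padic_poly p g" "padic_poly p h" "padic_poly_factors p f g h"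
    show "padic_unit p (\<lambda>n. coeff (g n) 0) \<or> padic_unit p (\<lambda>n. coeff (h n) 0)"
      using padic_factors_imp_not_irreducible[OF pid p(1) mu u gh] irr
        padic_unit_iff_not_dvd[OF pid p(1)] gh(1,2) by (auto simp: padic_poly_def)
  qed
  have "coeff f 0 dvd p ^ m"
  proof -
    obtain v where "1 = u * v"
      using u by (elim dvdE)
    then have "p ^ m = coeff f 0 * v"
      by (metis mu mult.assoc mult_1_right)
    then show ?thesis
      by (rule dvdI)
  qed
  then show ?thesis
    using p(1) m unit_factor mu by (intro exI[of _ p] exI[of _ m]) simp
qed

theorem theorem1p1:
  fixes f :: "'a::idom poly"
  assumes "pid_ring TYPE('a)"
  shows "irreducible (fps_of_poly f) \<longleftrightarrow>
    ((coeff f 0 = 0 \<and> coeff f 1 dvd 1) \<or>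
     (\<exists>p m. prime_elem p \<and> m \<ge> 1 \<and> coeff f 0 dvd p ^ m \<and> p ^ m dvd coeff f 0 \<and>
        (\<forall>g h. padic_poly p g \<longrightarrow> padic_poly p h \<longrightarrow> padic_poly_factors p f g h \<longrightarrow>
           padic_unit p (\<lambda>n. coeff (g n) 0) \<or> padic_unit p (\<lambda>n. coeff (h n) 0))))"
proof (cases "coeff f 0 = 0")
  case True
  have "irreducible (fps_of_poly f) \<longleftrightarrow> coeff f 1 dvd 1"
    using fps_irreducible_if_unit_nth_1[of "fps_of_poly f"]
      fps_irreducible_imp_unit_nth_1[of "fps_of_poly f"] True by auto
  moreover have "\<not> (prime_elem p \<and> coeff f 0 dvd p ^ m)" for p :: 'a and m
    using True by (auto simp: prime_elem_def)
  ultimately show ?thesis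
    using True by blast
next
  case False
  have "irreducible (fps_of_poly f) \<longleftrightarrow> (\<exists>p m. prime_elem p \<and> 1 \<le> m \<and>
      coeff f 0 dvd p ^ m \<and> p ^ m dvd coeff f 0 \<and> padic_unit_const_factor p f)"
    using irreducible_imp_padic_unit_const_factor[OF assms _ False]
      padic_unit_const_factor_imp_irreducible[OF assms] by blast
  then show ?thesis
    using False unfolding padic_unit_const_factor_def by (simp only: simp_thms)
qed

end
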